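(* For every combinatorial auction with $d$-SOS valuations ($d\ge1$) over single-dimensional signals $s_i\in\{0,1,\dots,k-1\}$ ($k\ge2$), the mechanism that runs Random Threshold with probability $\frac{(k-1)d}{d(k+1)+2}$ and Random Sampling otherwise is universally ex-post IC-IR and gives a $(d(k+1)+2)$-approximation to the optimal social welfare.
   Context: Setting: $n$ agents, $m$ items; agent $i$ has private signal $s_i$; value for bundle $T$ is $v_{iT}(\mathbf{s})\ge0$, public, weakly increasing in each coordinate, strictly in $s_i$; each $v_{iT}$ is $d$-SOS: for every coordinate $j$, $s_j$, $\delta\ge0$, $\mathbf{s}'_{-j}\le\mathbf{s}_{-j}$ coordinate-wise, $d\big(v(\mathbf{s}'_{-j},s_j+\delta)-v(\mathbf{s}'_{-j},s_j)\big)\ge v(\mathbf{s}_{-j},s_j+\delta)-v(\mathbf{s}_{-j},s_j)$. Allocations assign disjoint bundles. Random Threshold: choose $\ell$ uniformly in $\{1,\dots,k-1\}$; $N_{\ge\ell}=\{i:s_i\ge\ell\}$, $N_{<\ell}$ the rest; for $i\in N_{\ge\ell}$, $\bar v_{iT}=v_{iT}(\mathbf{s}_{N_{<\ell}},\boldsymbol{\ell}_{N_{\ge\ell}})$, else $0$; allocate a $\bar v$-welfare-maximizing allocation among $N_{\ge\ell}$; agent receiving $\bar T_i$ pays $v_{i\bar T_i}(\mathbf{s}_{-i},\ell-1)$. Random Sampling: split agents uniformly at random into $A,B$; for $i\in B$, $\tilde v_{iT}=v_{iT}(\mathbf{s}_A,\mathbf{0}_B)$, for $i\in A$, $0$; allocate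 a $\tilde v$-welfare-maximizing allocation among $B$; no payments. *)

theory Defs
  imports Main Complex_Main
begin

(* Agents are 0..<n, items are 0..<m, signals take values in {0..<k}.
   A valuation profile v i T s is agent i's value for bundle T at signal profile s. *)
type_synonym valuation = "nat \<Rightarrow> nat set \<Rightarrow> (nat \<Rightarrow> nat) \<Rightarrow> real"

definition profiles :: "nat \<Rightarrow> nat \<Rightarrow> (nat \<Rightarrow> nat) set" where
  "profiles n k = {s. (\<forall>i<n. s i < k) \<and> (\<forall>i. n \<le> i \<longrightarrow> s i = 0)}"

definition bval :: "valuation \<Rightarrow> nat \<Rightarrow> nat set \<Rightarrow> (nat \<Rightarrow> nat) \<Rightarrow> real" where
  "bval v i T s = (if T = {} then 0 else v i T s)"

definition dSOS_valuations :: "nat \<Rightarrow> nat \<Rightarrow> nat \<Rightarrow> real \<Rightarrow> valuation \<Rightarrow> bool" where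
  "dSOS_valuations n m k d v \<longleftrightarrow>
    (\<forall>i<n. \<forall>T. T \<noteq> {} \<and> T \<subseteq> {..<m} \<longrightarrow>
      (\<forall>s\<in>profiles n k. 0 \<le> v i T s) \<and>
      (\<forall>s\<in>profiles n k. \<forall>j<n. \<forall>t. s j \<le> t \<and> t < k \<longrightarrow> v i T s \<le> v i T (s(j := t))) \<and>
      (\<forall>s\<in>profiles n k. \<forall>t. s i < t \<and> t < k \<longrightarrow> v i T s < v i T (s(i := t))) \<and>
      (\<forall>s\<in>profiles n k. \<forall>s'\<in>profiles n k. \<forall>j<n. \<forall>\<delta>::nat.
         s j + \<delta> < k \<and> (\<forall>l. l \<noteq> j \<longrightarrow> s' l \<le> s l) \<longrightarrow>
         v i T (s(j := s j + \<delta>)) - v i T s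
           \<le> d * (v i T (s'(j := s j + \<delta>)) - v i T (s'(j := s j)))))"

definition feasible_alloc :: "nat \<Rightarrow> nat set \<Rightarrow> (nat \<Rightarrow> nat set) \<Rightarrow> bool" where
  "feasible_alloc m S X \<longleftrightarrow>
     (\<forall>i. X i \<subseteq> {..<m}) \<and> (\<forall>i. i \<notin> S \<longrightarrow> X i = {}) \<and>
     (\<forall>i j. i \<noteq> j \<longrightarrow> X i \<inter> X j = {})"

definition welfare_of :: "nat set \<Rightarrow> (nat \<Rightarrow> nat set \<Rightarrow> real) \<Rightarrow> (nat \<Rightarrow> nat set) \<Rightarrow> real" where
  "welfare_of S w X = (\<Sum>i\<in>S. if X i = {} then 0 else w i (X i))"

definition is_max_selector ::
  "nat \<Rightarrow> nat \<Rightarrow> (nat set \<Rightarrow> (nat \<Rightarrow> nat set \<Rightarrow> real) \<Rightarrow> nat \<Rightarrow> nat set) \<Rightarrow> bool" where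
  "is_max_selector n m sel \<longleftrightarrow>
    (\<forall>S w. S \<subseteq> {..<n} \<longrightarrow>
       feasible_alloc m S (sel S w) \<and>
       (\<forall>X. feasible_alloc m S X \<longrightarrow> welfare_of S w X \<le> welfare_of S w (sel S w)))"

(* Random Threshold with fixed threshold l, on reported profile r *)
definition RT_alloc ::
  "nat \<Rightarrow> valuation \<Rightarrow> (nat set \<Rightarrow> (nat \<Rightarrow> nat set \<Rightarrow> real) \<Rightarrow> nat \<Rightarrow> nat set) \<Rightarrow> nat
   \<Rightarrow> (nat \<Rightarrow> nat) \<Rightarrow> nat \<Rightarrow> nat set" where
  "RT_alloc n v sel l r =
     (let N = {i. i < n \<and> l \<le> r i};
          w = (\<lambda>i T. if i \<in> N then v i T (\<lambda>j. if j \<in> N then l else r j) else 0)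
      in sel N w)"

definition RT_pay ::
  "nat \<Rightarrow> valuation \<Rightarrow> (nat set \<Rightarrow> (nat \<Rightarrow> nat set \<Rightarrow> real) \<Rightarrow> nat \<Rightarrow> nat set) \<Rightarrow> nat
   \<Rightarrow> (nat \<Rightarrow> nat) \<Rightarrow> nat \<Rightarrow> real" where
  "RT_pay n v sel l r i =
     (let X = RT_alloc n v sel l r in
      if X i = {} then 0 else v i (X i) (r(i := l - 1)))"

(* Random Sampling with fixed partition: B the bidding side, A = complement *)
definition RS_alloc ::
  "valuation \<Rightarrow> (nat set \<Rightarrow> (nat \<Rightarrow> nat set \<Rightarrow> real) \<Rightarrow> nat \<Rightarrow> nat set) \<Rightarrow> nat set
   \<Rightarrow> (nat \<Rightarrow> nat) \<Rightarrow> nat \<Rightarrow> nat set" where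
  "RS_alloc v sel B r =
     sel B (\<lambda>i T. if i \<in> B then v i T (\<lambda>j. if j \<in> B then 0 else r j) else 0)"

definition ex_post_IC_IR ::
  "nat \<Rightarrow> nat \<Rightarrow> valuation \<Rightarrow> ((nat \<Rightarrow> nat) \<Rightarrow> nat \<Rightarrow> nat set)
   \<Rightarrow> ((nat \<Rightarrow> nat) \<Rightarrow> nat \<Rightarrow> real) \<Rightarrow> bool" where
  "ex_post_IC_IR n k v alloc pay \<longleftrightarrow>
    (\<forall>s\<in>profiles n k. \<forall>i<n.
       0 \<le> bval v i (alloc s i) s - pay s i \<and>
       (\<forall>t<k. bval v i (alloc (s(i := t)) i) s - pay (s(i := t)) i
              \<le> bval v i (alloc s i) s - pay s i))"

definition true_welfare :: "nat \<Rightarrow> valuation \<Rightarrow> (nat \<Rightarrow> nat) \<Rightarrow> (nat \<Rightarrow> nat set) \<Rightarrow> real" where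
  "true_welfare n v s X = welfare_of {..<n} (\<lambda>i T. v i T s) X"

(* expected welfare of the mixture: RT with prob. p (l uniform in {1..k-1}),
   RS with prob. 1-p (uniformly random partition, i.e. B uniform over subsets of agents) *)
definition mix_expected_welfare ::
  "nat \<Rightarrow> nat \<Rightarrow> valuation \<Rightarrow> (nat set \<Rightarrow> (nat \<Rightarrow> nat set \<Rightarrow> real) \<Rightarrow> nat \<Rightarrow> nat set)
   \<Rightarrow> (nat set \<Rightarrow> (nat \<Rightarrow> nat set \<Rightarrow> real) \<Rightarrow> nat \<Rightarrow> nat set) \<Rightarrow> real \<Rightarrow> (nat \<Rightarrow> nat) \<Rightarrow> real" where
  "mix_expected_welfare n k v selRT selRS p s =
     p * ((\<Sum>l\<in>{1..<k}. true_welfare n v s (RT_alloc n v selRT l s)) / real (k - 1))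
     + (1 - p) * ((\<Sum>B\<in>Pow {..<n}. true_welfare n v s (RS_alloc v selRS B s)) / 2 ^ n)"

end

theory Submission
  imports Defs
begin

text \<open>
  Fix the true profile \<open>s\<close> and an allocation \<open>X\<close>, and split the value of agent \<open>i\<close> for \<open>X i\<close>
  into the part due to its own signal, \<open>v(s) - v(s\<^sub>-\<^sub>i, 0)\<close>, and the rest, \<open>v(s\<^sub>-\<^sub>i, 0)\<close>.
  The first part telescopes over the levels \<open>l \<le> s\<^sub>i\<close>; by \<open>d\<close>-SOS each increment
  \<open>l - 1 \<rightarrow> l\<close> is at most \<open>d\<close> times the value at the Random Threshold signals for threshold
  \<open>l\<close>, so summing over \<open>l\<close> and \<open>i\<close> bounds the first part by \<open>d\<close> times \<open>(k - 1)\<close> times the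
  expected welfare of Random Threshold. For the second part, \<open>d\<close>-SOS applied to a partition
  \<open>A, B\<close> of the other agents gives \<open>v(s\<^sub>-\<^sub>i, 0) \<le> v(s\<^sub>A, 0) + d v(s\<^sub>B, 0)\<close>; averaging over
  the partitions bounds it by \<open>2(1 + d)\<close> times the expected welfare of Random Sampling. Both
  mechanisms allocate welfare-maximally for signals that are pointwise below the true ones,
  so the true welfare they achieve dominates these bounds by monotonicity. The mixing
  probability balances the two estimates. Incentive compatibility: Random Threshold is a
  posted-price mechanism once the threshold is fixed, and in Random Sampling the reports of
  the bidders do not influence the allocation.
\<close>

section \<open>The allocation rules\<close>

definition RT_bidders :: "nat \<Rightarrow> nat \<Rightarrow> (nat \<Rightarrow> nat) \<Rightarrow> nat set" where
  "RT_bidders n l r = {j. j < n \<and> l \<le> r j}"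

definition RT_signals :: "nat \<Rightarrow> nat \<Rightarrow> (nat \<Rightarrow> nat) \<Rightarrow> nat \<Rightarrow> nat" where
  "RT_signals n l r = (\<lambda>j. if j \<in> RT_bidders n l r then l else r j)"

lemma RT_alloc_eq:
  "RT_alloc n v sel l r =
     sel (RT_bidders n l r) (\<lambda>i T. if i \<in> RT_bidders n l r then v i T (RT_signals n l r) else 0)"
  unfolding RT_alloc_def RT_bidders_def RT_signals_def Let_def ..

lemma RT_alloc_feasible:
  assumes "is_max_selector n m sel"
  shows "feasible_alloc m (RT_bidders n l r) (RT_alloc n v sel l r)"
proof -
  have "RT_bidders n l r \<subseteq> {..<n}"
    by (auto simp: RT_bidders_def)
  with assms show ?thesis
    unfolding RT_alloc_eq is_max_selector_def by simp
qed

lemma RT_alloc_subset: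
  "is_max_selector n m sel \<Longrightarrow> RT_alloc n v sel l r i \<subseteq> {..<m}"
  using RT_alloc_feasible unfolding feasible_alloc_def by blast

lemma RT_alloc_below_threshold:
  "is_max_selector n m sel \<Longrightarrow> r i < l \<Longrightarrow> RT_alloc n v sel l r i = {}"
  using RT_alloc_feasible[of n m sel l r] unfolding feasible_alloc_def RT_bidders_def by auto

lemma RT_alloc_upd_above_threshold:
  assumes "i < n" "l \<le> r i" "l \<le> t"
  shows "RT_alloc n v sel l (r(i := t)) = RT_alloc n v sel l r"
proof -
  have "RT_bidders n l (r(i := t)) = RT_bidders n l r"
    using assms by (auto simp: RT_bidders_def)
  moreover have "RT_signals n l (r(i := t)) = RT_signals n l r"
    using assms by (auto simp: RT_signals_def RT_bidders_def fun_eq_iff)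
  ultimately show ?thesis
    by (simp only: RT_alloc_eq)
qed

lemma RS_alloc_eq:
  "RS_alloc v sel B r = sel B (\<lambda>i T. if i \<in> B then v i T (override_on r (\<lambda>_. 0) B) else 0)"
  unfolding RS_alloc_def override_on_def ..

section \<open>Monotonicity, \<open>d\<close>-SOS and incentive compatibility\<close>

locale dSOS_auction =
  fixes n m k :: nat and d :: real and v :: valuation
  assumes dSOS: "dSOS_valuations n m k d v"
begin

context
  fixes i T
  assumes i: "i < n" and T: "T \<noteq> {}" "T \<subseteq> {..<m}"
begin

lemma dSOS_conditions:
  "(\<forall>s\<in>profiles n k. 0 \<le> v i T s) \<and>
   (\<forall>s\<in>profiles n k. \<forall>j<n. \<forall>t. s j \<le> t \<and> t < k \<longrightarrow> v i T s \<le> v i T (s(j := t))) \<and>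
   (\<forall>s\<in>profiles n k. \<forall>t. s i < t \<and> t < k \<longrightarrow> v i T s < v i T (s(i := t))) \<and>
   (\<forall>s\<in>profiles n k. \<forall>s'\<in>profiles n k. \<forall>j<n. \<forall>\<delta>::nat.
      s j + \<delta> < k \<and> (\<forall>l. l \<noteq> j \<longrightarrow> s' l \<le> s l) \<longrightarrow>
      v i T (s(j := s j + \<delta>)) - v i T s \<le> d * (v i T (s'(j := s j + \<delta>)) - v i T (s'(j := s j))))"
  using dSOS[unfolded dSOS_valuations_def, rule_format, OF i conjI, OF T] .

lemma value_nonneg: "s \<in> profiles n k \<Longrightarrow> 0 \<le> v i T s"
  using dSOS_conditions by blast

lemma value_mono_coord:
  "s \<in> profiles n k \<Longrightarrow> j < n \<Longrightarrow> s j \<le> t \<Longrightarrow> t < k \<Longrightarrow> v i T s \<le> v i T (s(j := t))"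
  using dSOS_conditions by blast

lemma value_sos:
  assumes "s \<in> profiles n k" "s' \<in> profiles n k" "j < n" "s j + \<delta> < k" "\<forall>l. l \<noteq> j \<longrightarrow> s' l \<le> s l"
  shows "v i T (s(j := s j + \<delta>)) - v i T s \<le> d * (v i T (s'(j := s j + \<delta>)) - v i T (s'(j := s j)))"
  using dSOS_conditions assms by blast

lemma value_upd_le:
  assumes s: "s \<in> profiles n k" and "t \<le> s i"
  shows "v i T (s(i := t)) \<le> v i T s"
proof -
  have "s(i := t) \<in> profiles n k"
    using s i assms(2) by (auto simp: profiles_def)
  with value_mono_coord[OF this i, of "s i"] show ?thesis
    using assms(2) s i by (simp add: profiles_def)
qed

lemma value_mono:
  assumes s: "s \<in> profiles n k" and s': "s' \<in> profiles n k" and le: "\<forall>j. s j \<le> s' j"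
  shows "v i T s \<le> v i T s'"
proof -
  have "v i T s \<le> v i T (override_on s s' {..<q})" for q
  proof (induction q)
    case (Suc q)
    let ?p = "override_on s s' {..<q}"
    have p: "?p \<in> profiles n k"
      using s s' by (auto simp: profiles_def override_on_def)
    show ?case
    proof (cases "q < n")
      case True
      have "v i T ?p \<le> v i T (?p(q := s' q))"
        by (rule value_mono_coord) (use p True le s' in \<open>auto simp: profiles_def\<close>)
      moreover have "override_on s s' {..<Suc q} = ?p(q := s' q)"
        by (simp add: lessThan_Suc override_on_insert)
      ultimately show ?thesis
        using Suc.IH by (metis order.trans)
    next
      case False
      then have "override_on s s' {..<Suc q} = ?p"
        using s s' by (auto simp: fun_eq_iff profiles_def override_on_def less_Suc_eq)
      then show ?thesis
        using Suc.IH by simp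
    qed
  qed simp
  moreover have "override_on s s' {..<n} = s'"
    using s s' by (auto simp: fun_eq_iff profiles_def override_on_def)
  ultimately show ?thesis
    by metis
qed

lemma value_increment_override_le:
  assumes a: "a \<in> profiles n k" and b: "b \<in> profiles n k" and s: "s \<in> profiles n k"
    and ab: "\<forall>j. a j \<le> b j" and C: "finite C" "C \<subseteq> {..<n}" "\<forall>j\<in>C. a j = b j \<and> b j \<le> s j"
  shows "v i T (override_on b s C) - v i T b \<le> d * (v i T (override_on a s C) - v i T a)"
  using C
proof (induction C rule: finite_induct)
  case (insert c C)
  let ?b = "override_on b s C" and ?a = "override_on a s C"
  have c: "c < n" "?a c = b c" "?b c = b c" "b c \<le> s c" "s c < k"
    using insert s by (auto simp: profiles_def)
  have "?b \<in> profiles n k" "?a \<in> profiles n k"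
    using a b s insert.prems by (auto simp: profiles_def override_on_def)
  then have "v i T (?b(c := ?b c + (s c - b c))) - v i T ?b
      \<le> d * (v i T (?a(c := ?b c + (s c - b c))) - v i T (?a(c := ?b c)))"
    by (rule value_sos) (use c ab in \<open>auto simp: override_on_def\<close>)
  then have "v i T (override_on b s (insert c C)) - v i T ?b
      \<le> d * (v i T (override_on a s (insert c C)) - v i T ?a)"
    using c fun_upd_idem[of ?a c "b c"] by (simp add: override_on_insert)
  moreover have "v i T ?b - v i T b \<le> d * (v i T ?a - v i T a)"
    using insert by simp
  ultimately show ?case
    by (simp add: algebra_simps)
qed simp

end

lemma welfare_le_selected_welfare:
  assumes sel: "is_max_selector n m sel" and S: "S \<subseteq> {..<n}" and X: "feasible_alloc m {..<n} X"
    and z: "z \<in> profiles n k" and s: "s \<in> profiles n k" and zs: "\<forall>j. z j \<le> s j"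
  shows "(\<Sum>i\<in>S. if X i = {} then 0 else v i (X i) z)
     \<le> true_welfare n v s (sel S (\<lambda>i T. if i \<in> S then v i T z else 0))"
proof -
  let ?w = "\<lambda>i T. if i \<in> S then v i T z else 0"
  let ?Y = "sel S ?w"
  have Y: "feasible_alloc m S ?Y"
    and opt: "\<And>X. feasible_alloc m S X \<Longrightarrow> welfare_of S ?w X \<le> welfare_of S ?w ?Y"
    using sel S unfolding is_max_selector_def by blast+
  let ?XS = "\<lambda>i. if i \<in> S then X i else {}"
  have "feasible_alloc m S ?XS"
    using X unfolding feasible_alloc_def by auto
  have "(\<Sum>i\<in>S. if X i = {} then 0 else v i (X i) z) = welfare_of S ?w ?XS"
    unfolding welfare_of_def by (rule sum.cong) auto
  also have "\<dots> \<le> welfare_of S ?w ?Y"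
    by (rule opt) fact
  also have "\<dots> \<le> (\<Sum>i\<in>S. if ?Y i = {} then 0 else v i (?Y i) s)"
    unfolding welfare_of_def
  proof (rule sum_mono)
    fix i assume "i \<in> S"
    moreover have "?Y i \<subseteq> {..<m}"
      using Y unfolding feasible_alloc_def by blast
    ultimately show "(if ?Y i = {} then 0 else ?w i (?Y i)) \<le> (if ?Y i = {} then 0 else v i (?Y i) s)"
      using value_mono[OF _ _ _ z s zs] S by auto
  qed
  also have "\<dots> \<le> true_welfare n v s ?Y"
    unfolding true_welfare_def welfare_of_def
    by (rule sum_mono2) (use S Y in \<open>auto simp: feasible_alloc_def\<close>)
  finally show ?thesis .
qed

lemma RT_ex_post_IC_IR:
  assumes sel: "is_max_selector n m sel" and l: "l < k"
  shows "ex_post_IC_IR n k v (RT_alloc n v sel l) (RT_pay n v sel l)"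
  unfolding ex_post_IC_IR_def
proof (intro ballI allI impI conjI)
  fix s i assume s: "s \<in> profiles n k" and i: "i < n"
  let ?X = "\<lambda>r. RT_alloc n v sel l r i"
  define utility where "utility Y = (if Y = {} then 0 else v i Y s - v i Y (s(i := l - 1)))" for Y
  have utility_eq: "bval v i (?X (s(i := t))) s - RT_pay n v sel l (s(i := t)) i = utility (?X (s(i := t)))"
    for t unfolding utility_def bval_def RT_pay_def Let_def by simp
  have utility_eq_truthful: "bval v i (?X s) s - RT_pay n v sel l s i = utility (?X s)"
    using utility_eq[of "s i"] by simp
  have utility_nonneg: "0 \<le> utility Y" if "l \<le> s i" "Y \<subseteq> {..<m}" for Y
    using value_upd_le[OF i _ that(2) s] that(1) by (simp add: utility_def)
  have utility_nonpos: "utility Y \<le> 0" if "s i < l" "Y \<subseteq> {..<m}" for Y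
    using value_mono_coord[OF i _ that(2) s i] that(1) l by (simp add: utility_def)
  have truthful_nonneg: "0 \<le> utility (?X s)"
    using utility_nonneg RT_alloc_subset[OF sel] RT_alloc_below_threshold[OF sel, of s i l]
    by (cases "l \<le> s i") (auto simp: utility_def)
  then show "0 \<le> bval v i (?X s) s - RT_pay n v sel l s i"
    by (simp only: utility_eq_truthful)
  fix t assume "t < k"
  have "utility (?X (s(i := t))) \<le> utility (?X s)"
  proof (cases "l \<le> t")
    case False
    then show ?thesis
      using truthful_nonneg RT_alloc_below_threshold[OF sel, of "s(i := t)" i l]
      by (simp add: utility_def)
  next
    case above: True
    show ?thesis
    proof (cases "l \<le> s i")
      case True
      then show ?thesis
        using RT_alloc_upd_above_threshold[where r = s, OF i True above] by simp
    next
      case False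
      then have "utility (?X (s(i := t))) \<le> 0"
        using utility_nonpos RT_alloc_subset[OF sel] by simp
      with truthful_nonneg show ?thesis
        by linarith
    qed
  qed
  then show "bval v i (?X (s(i := t))) s - RT_pay n v sel l (s(i := t)) i
      \<le> bval v i (?X s) s - RT_pay n v sel l s i"
    by (simp only: utility_eq utility_eq_truthful)
qed

lemma RS_ex_post_IC_IR:
  assumes sel: "is_max_selector n m sel" and B: "B \<subseteq> {..<n}"
  shows "ex_post_IC_IR n k v (RS_alloc v sel B) (\<lambda>_ _. 0)"
  unfolding ex_post_IC_IR_def
proof (intro ballI allI impI conjI)
  fix s i assume s: "s \<in> profiles n k" and i: "i < n"
  have feasible: "feasible_alloc m B (RS_alloc v sel B r)" for r
    using sel B unfolding RS_alloc_eq is_max_selector_def by blast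
  show "0 \<le> bval v i (RS_alloc v sel B s i) s - 0"
    using feasible[of s] value_nonneg[OF i _ _ s] unfolding bval_def feasible_alloc_def by auto
  fix t
  have "RS_alloc v sel B (s(i := t)) i = RS_alloc v sel B s i"
  proof (cases "i \<in> B")
    case True
    then have "override_on (s(i := t)) (\<lambda>_. 0) B = override_on s (\<lambda>_. 0) B"
      by (auto simp: fun_eq_iff override_on_def)
    then show ?thesis
      by (simp only: RS_alloc_eq)
  next
    case False
    then show ?thesis
      using feasible[of s] feasible[of "s(i := t)"] unfolding feasible_alloc_def by auto
  qed
  then show "bval v i (RS_alloc v sel B (s(i := t)) i) s - 0 \<le> bval v i (RS_alloc v sel B s i) s - 0"
    by simp
qed

end

section \<open>Welfare bounds\<close>

lemma mixture_scaled_eq: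
  fixes D K d R Z :: real
  assumes "D \<noteq> 0" "K \<noteq> 0" "D = d * (K + 2) + 2"
  shows "D * ((K * d / D) * (R / K) + (1 - K * d / D) * Z) = d * R + (2 * d + 2) * Z"
proof -
  have "D * ((K * d / D) * (R / K)) = d * R" and "D * (1 - K * d / D) = 2 * d + 2"
    using assms by (simp_all add: field_simps)
  then show ?thesis
    by (simp add: distrib_left mult.assoc[symmetric])
qed

locale dSOS_auction_nonneg = dSOS_auction +
  assumes d_nonneg: "0 \<le> d" and k_pos: "0 < k"
begin

lemma zero_profile: "(\<lambda>_. 0) \<in> profiles n k"
  using k_pos by (simp add: profiles_def)

lemma override_zero_profile: "s \<in> profiles n k \<Longrightarrow> override_on (\<lambda>_. 0) s A \<in> profiles n k"
  by (auto simp: profiles_def override_on_def)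

lemma value_own_signal_gain_le:
  assumes i: "i < n" and T: "T \<noteq> {}" "T \<subseteq> {..<m}" and s: "s \<in> profiles n k"
  shows "v i T s - v i T (s(i := 0))
     \<le> d * (\<Sum>l\<in>{1..<k}. if l \<le> s i then v i T (RT_signals n l s) else 0)"
proof -
  let ?z = "\<lambda>l. RT_signals n l s" and ?g = "\<lambda>l. v i T (s(i := l))"
  have sik: "s i < k"
    using s i by (simp add: profiles_def)
  have increment: "?g l - ?g (l - 1) \<le> d * v i T (?z l)" if l: "1 \<le> l" "l \<le> s i" for l
  proof -
    have z: "?z l \<in> profiles n k" "(?z l)(i := l - 1) \<in> profiles n k"
      using s l sik by (auto simp: profiles_def RT_signals_def RT_bidders_def)
    have "s(i := l - 1) \<in> profiles n k"
      using s i l sik by (auto simp: profiles_def)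
    \<comment> \<open>\<open>RT_signals n l s\<close> is \<open>l\<close> at \<open>i\<close> and below \<open>s\<close> elsewhere: the smaller profile for \<open>d\<close>-SOS\<close>
    from value_sos[OF i T this z(1) i, of 1]
    have "?g l - ?g (l - 1) \<le> d * (v i T (?z l) - v i T ((?z l)(i := l - 1)))"
      using l sik by (simp add: RT_signals_def RT_bidders_def fun_upd_idem i)
    moreover have "0 \<le> d * v i T ((?z l)(i := l - 1))"
      using value_nonneg[OF i T z(2)] d_nonneg by simp
    ultimately show ?thesis
      by (simp add: right_diff_distrib)
  qed
  have "{l \<in> {1..<k}. l \<le> s i} = {1..s i}"
    using sik by auto
  then have "v i T s - v i T (s(i := 0)) = (\<Sum>l\<in>{1..<k}. if l \<le> s i then ?g l - ?g (l - 1) else 0)"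
    using sum_telescope''[of 0 "s i" ?g] by (simp add: sum.inter_filter[symmetric])
  also have "\<dots> \<le> (\<Sum>l\<in>{1..<k}. if l \<le> s i then d * v i T (?z l) else 0)"
    by (rule sum_mono) (use increment in auto)
  finally show ?thesis
    by (simp add: sum_distrib_left if_distrib cong: if_cong)
qed

lemma own_signal_gain_le_RT_welfare:
  assumes sel: "is_max_selector n m sel" and s: "s \<in> profiles n k" and X: "feasible_alloc m {..<n} X"
  shows "(\<Sum>i<n. (if X i = {} then 0 else v i (X i) s) - (if X i = {} then 0 else v i (X i) (s(i := 0))))
     \<le> d * (\<Sum>l\<in>{1..<k}. true_welfare n v s (RT_alloc n v sel l s))"
proof -
  let ?t = "\<lambda>i l. if X i = {} then 0 else if l \<le> s i then v i (X i) (RT_signals n l s) else 0"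
  have per_threshold: "(\<Sum>i<n. ?t i l) \<le> true_welfare n v s (RT_alloc n v sel l s)"
    if l: "l \<in> {1..<k}" for l
  proof -
    have z: "RT_signals n l s \<in> profiles n k" "\<forall>j. RT_signals n l s j \<le> s j"
      using s l by (auto simp: profiles_def RT_signals_def RT_bidders_def)
    have "(\<Sum>i<n. ?t i l) = (\<Sum>i\<in>RT_bidders n l s. if X i = {} then 0 else v i (X i) (RT_signals n l s))"
      by (rule sum.mono_neutral_cong_right) (auto simp: RT_bidders_def)
    also have "\<dots> \<le> true_welfare n v s (RT_alloc n v sel l s)"
      unfolding RT_alloc_eq
      by (rule welfare_le_selected_welfare[OF sel _ X z(1) s z(2)]) (auto simp: RT_bidders_def)
    finally show ?thesis .
  qed
  have per_agent: "(if X i = {} then 0 else v i (X i) s) - (if X i = {} then 0 else v i (X i) (s(i := 0)))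
      \<le> d * (\<Sum>l\<in>{1..<k}. ?t i l)" if i: "i < n" for i
    using value_own_signal_gain_le[OF i _ _ s, of "X i"] X
    by (cases "X i = {}") (auto simp: feasible_alloc_def)
  have "(\<Sum>i<n. (if X i = {} then 0 else v i (X i) s) - (if X i = {} then 0 else v i (X i) (s(i := 0))))
      \<le> (\<Sum>i<n. d * (\<Sum>l\<in>{1..<k}. ?t i l))"
    by (rule sum_mono) (use per_agent in auto)
  also have "\<dots> = d * (\<Sum>l\<in>{1..<k}. \<Sum>i<n. ?t i l)"
    by (simp add: sum_distrib_left[symmetric] sum.swap[of _ "{..<n}"])
  also have "\<dots> \<le> d * (\<Sum>l\<in>{1..<k}. true_welfare n v s (RT_alloc n v sel l s))"
    using d_nonneg by (intro mult_left_mono sum_mono per_threshold) auto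
  finally show ?thesis .
qed

lemma value_zeroed_le_split:
  assumes i: "i < n" and T: "T \<noteq> {}" "T \<subseteq> {..<m}" and s: "s \<in> profiles n k"
    and A: "A \<subseteq> {..<n} - {i}"
  shows "v i T (s(i := 0))
     \<le> v i T (override_on (\<lambda>_. 0) s A) + d * v i T (override_on (\<lambda>_. 0) s ({..<n} - {i} - A))"
proof -
  let ?C = "{..<n} - {i} - A"
  have "override_on (override_on (\<lambda>_. 0) s A) s ?C = s(i := 0)"
    using s A i by (auto simp: override_on_def fun_eq_iff profiles_def)
  moreover have "v i T (override_on (override_on (\<lambda>_. 0) s A) s ?C) - v i T (override_on (\<lambda>_. 0) s A)
      \<le> d * (v i T (override_on (\<lambda>_. 0) s ?C) - v i T (\<lambda>_. 0))"
    by (rule value_increment_override_le[OF i T zero_profile override_zero_profile[OF s] s])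
      (use A in \<open>auto simp: override_on_def\<close>)
  moreover have "0 \<le> d * v i T (\<lambda>_. 0)"
    using value_nonneg[OF i T zero_profile] d_nonneg by simp
  ultimately show ?thesis
    by (simp add: right_diff_distrib)
qed

lemma value_zeroed_le_average:
  assumes i: "i < n" and T: "T \<noteq> {}" "T \<subseteq> {..<m}" and s: "s \<in> profiles n k"
  shows "2 ^ (n - 1) * v i T (s(i := 0))
     \<le> (1 + d) * (\<Sum>A\<in>Pow ({..<n} - {i}). v i T (override_on (\<lambda>_. 0) s A))"
proof -
  let ?O = "{..<n} - {i}" and ?f = "\<lambda>A. v i T (override_on (\<lambda>_. 0) s A)"
  have "card (Pow ?O) = 2 ^ (n - 1)"
    using i by (simp add: card_Pow)
  then have "2 ^ (n - 1) * v i T (s(i := 0)) = (\<Sum>A\<in>Pow ?O. v i T (s(i := 0)))"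
    by simp
  also have "\<dots> \<le> (\<Sum>A\<in>Pow ?O. ?f A + d * ?f (?O - A))"
    by (rule sum_mono) (use value_zeroed_le_split[OF i T s] in auto)
  also have "(\<Sum>A\<in>Pow ?O. ?f (?O - A)) = (\<Sum>A\<in>Pow ?O. ?f A)"
    by (rule sum.reindex_bij_witness[of _ "\<lambda>A. ?O - A" "\<lambda>A. ?O - A"]) auto
  then have "(\<Sum>A\<in>Pow ?O. ?f A + d * ?f (?O - A)) = (1 + d) * (\<Sum>A\<in>Pow ?O. ?f A)"
    by (simp add: sum.distrib sum_distrib_left[symmetric] algebra_simps)
  finally show ?thesis .
qed

text \<open>
  Reindexing by \<open>B = {..<n} - A\<close>, the sampled sets \<open>A\<close> above are exactly the sides seen by
  the bidders \<open>B \<ni> i\<close> of Random Sampling.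
\<close>

lemma value_zeroed_le_RS_average:
  assumes i: "i < n" and T: "T \<noteq> {}" "T \<subseteq> {..<m}" and s: "s \<in> profiles n k"
  shows "2 ^ n * v i T (s(i := 0))
     \<le> 2 * (1 + d) * (\<Sum>B\<in>Pow {..<n}. if i \<in> B then v i T (override_on s (\<lambda>_. 0) B) else 0)"
proof -
  let ?O = "{..<n} - {i}"
  have "(\<Sum>B\<in>Pow {..<n}. if i \<in> B then v i T (override_on s (\<lambda>_. 0) B) else 0)
      = (\<Sum>B\<in>{B\<in>Pow {..<n}. i \<in> B}. v i T (override_on s (\<lambda>_. 0) B))"
    by (rule sum.inter_filter[symmetric]) simp
  also have "\<dots> = (\<Sum>A\<in>Pow ?O. v i T (override_on s (\<lambda>_. 0) ({..<n} - A)))"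
    by (rule sum.reindex_bij_witness[of _ "\<lambda>A. {..<n} - A" "\<lambda>B. {..<n} - B"])
      (use i in \<open>auto simp: Diff_Diff_Int Int_absorb1\<close>)
  also have "\<dots> = (\<Sum>A\<in>Pow ?O. v i T (override_on (\<lambda>_. 0) s A))"
  proof (rule sum.cong)
    fix A assume "A \<in> Pow ?O"
    then have "override_on s (\<lambda>_. 0) ({..<n} - A) = override_on (\<lambda>_. 0) s A"
      using s by (auto simp: override_on_def fun_eq_iff profiles_def)
    then show "v i T (override_on s (\<lambda>_. 0) ({..<n} - A)) = v i T (override_on (\<lambda>_. 0) s A)"
      by simp
  qed simp
  finally have "(\<Sum>B\<in>Pow {..<n}. if i \<in> B then v i T (override_on s (\<lambda>_. 0) B) else 0)
      = (\<Sum>A\<in>Pow ?O. v i T (override_on (\<lambda>_. 0) s A))" .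
  moreover have "(2::real) ^ n = 2 * 2 ^ (n - 1)"
    using i by (cases n) auto
  ultimately show ?thesis
    using mult_left_mono[OF value_zeroed_le_average[OF i T s], of 2] by (simp add: algebra_simps)
qed

lemma zeroed_welfare_le_RS_welfare:
  assumes sel: "is_max_selector n m sel" and s: "s \<in> profiles n k" and X: "feasible_alloc m {..<n} X"
  shows "2 ^ n * (\<Sum>i<n. if X i = {} then 0 else v i (X i) (s(i := 0)))
     \<le> 2 * (1 + d) * (\<Sum>B\<in>Pow {..<n}. true_welfare n v s (RS_alloc v sel B s))"
proof -
  let ?h = "\<lambda>i B. if X i = {} then 0 else if i \<in> B then v i (X i) (override_on s (\<lambda>_. 0) B) else 0"
  have per_sample: "(\<Sum>i<n. ?h i B) \<le> true_welfare n v s (RS_alloc v sel B s)"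
    if B: "B \<in> Pow {..<n}" for B
  proof -
    have z: "override_on s (\<lambda>_. 0) B \<in> profiles n k" "\<forall>j. override_on s (\<lambda>_. 0) B j \<le> s j"
      using s by (auto simp: profiles_def override_on_def)
    have "(\<Sum>i<n. ?h i B) = (\<Sum>i\<in>B. if X i = {} then 0 else v i (X i) (override_on s (\<lambda>_. 0) B))"
      by (rule sum.mono_neutral_cong_right) (use B in auto)
    also have "\<dots> \<le> true_welfare n v s (RS_alloc v sel B s)"
      unfolding RS_alloc_eq by (rule welfare_le_selected_welfare[OF sel _ X z(1) s z(2)]) (use B in auto)
    finally show ?thesis .
  qed
  have per_agent: "2 ^ n * (if X i = {} then 0 else v i (X i) (s(i := 0)))
      \<le> 2 * (1 + d) * (\<Sum>B\<in>Pow {..<n}. ?h i B)" if i: "i < n" for i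
  proof (cases "X i = {}")
    case False
    moreover from X have "X i \<subseteq> {..<m}"
      by (simp add: feasible_alloc_def)
    ultimately show ?thesis
      using value_zeroed_le_RS_average[OF i False _ s] by simp
  qed simp
  have "2 ^ n * (\<Sum>i<n. if X i = {} then 0 else v i (X i) (s(i := 0)))
      \<le> (\<Sum>i<n. 2 * (1 + d) * (\<Sum>B\<in>Pow {..<n}. ?h i B))"
    unfolding sum_distrib_left[of "2 ^ n"] by (rule sum_mono) (rule per_agent, simp)
  also have "\<dots> = 2 * (1 + d) * (\<Sum>B\<in>Pow {..<n}. \<Sum>i<n. ?h i B)"
    by (simp add: sum_distrib_left[symmetric] sum.swap[of _ "{..<n}"])
  also have "\<dots> \<le> 2 * (1 + d) * (\<Sum>B\<in>Pow {..<n}. true_welfare n v s (RS_alloc v sel B s))"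
    using d_nonneg by (intro mult_left_mono sum_mono per_sample) auto
  finally show ?thesis .
qed

lemma true_welfare_le_mixture:
  assumes k2: "2 \<le> k" and selRT: "is_max_selector n m selRT" and selRS: "is_max_selector n m selRS"
    and s: "s \<in> profiles n k" and X: "feasible_alloc m {..<n} X"
  shows "true_welfare n v s X
      \<le> (d * (real k + 1) + 2) * mix_expected_welfare n k v selRT selRS
           ((real k - 1) * d / (d * (real k + 1) + 2)) s"
proof -
  define R where "R = (\<Sum>l\<in>{1..<k}. true_welfare n v s (RT_alloc n v selRT l s))"
  define Q where "Q = (\<Sum>B\<in>Pow {..<n}. true_welfare n v s (RS_alloc v selRS B s))"
  have "0 \<le> d * (real k + 1)"
    using d_nonneg by simp
  then have "d * (real k + 1) + 2 \<noteq> 0"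
    by linarith
  moreover have rk: "real (k - 1) = real k - 1"
    using k2 by simp
  ultimately have "(d * (real k + 1) + 2) * mix_expected_welfare n k v selRT selRS
      ((real k - 1) * d / (d * (real k + 1) + 2)) s = d * R + (2 * d + 2) * (Q / 2 ^ n)"
    unfolding mix_expected_welfare_def R_def[symmetric] Q_def[symmetric] rk
    by (intro mixture_scaled_eq) (use k2 in \<open>simp_all add: algebra_simps\<close>)
  moreover have "true_welfare n v s X
      = (\<Sum>i<n. (if X i = {} then 0 else v i (X i) s) - (if X i = {} then 0 else v i (X i) (s(i := 0))))
        + (\<Sum>i<n. if X i = {} then 0 else v i (X i) (s(i := 0)))"
    unfolding true_welfare_def welfare_of_def by (simp add: sum_subtractf)
  moreover have "(\<Sum>i<n. if X i = {} then 0 else v i (X i) (s(i := 0))) \<le> (2 * d + 2) * (Q / 2 ^ n)"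
    using zeroed_welfare_le_RS_welfare[OF selRS s X] unfolding Q_def[symmetric]
    by (simp add: field_simps)
  ultimately show ?thesis
    using own_signal_gain_le_RT_welfare[OF selRT s X] unfolding R_def[symmetric] by linarith
qed

end

theorem mainTheorem15:
  fixes n m k :: nat and d :: real and v :: valuation
    and selRT selRS :: "nat set \<Rightarrow> (nat \<Rightarrow> nat set \<Rightarrow> real) \<Rightarrow> nat \<Rightarrow> nat set"
  assumes "k \<ge> 2" and "d \<ge> 1"
    and "dSOS_valuations n m k d v"
    and "is_max_selector n m selRT" and "is_max_selector n m selRS"
  shows "(\<forall>l\<in>{1..<k}. ex_post_IC_IR n k v (RT_alloc n v selRT l) (RT_pay n v selRT l))
       \<and> (\<forall>B. B \<subseteq> {..<n} \<longrightarrow> ex_post_IC_IR n k v (RS_alloc v selRS B) (\<lambda>_ _. 0))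
       \<and> (\<forall>s\<in>profiles n k. \<forall>X. feasible_alloc m {..<n} X \<longrightarrow>
            true_welfare n v s X
              \<le> (d * (real k + 1) + 2) *
                 mix_expected_welfare n k v selRT selRS
                   ((real k - 1) * d / (d * (real k + 1) + 2)) s)"
proof -
  interpret dSOS_auction_nonneg n m k d v
    using assms(1-3) by unfold_locales auto
  show ?thesis
    using RT_ex_post_IC_IR[OF assms(4)] RS_ex_post_IC_IR[OF assms(5)]
      true_welfare_le_mixture[OF assms(1,4,5)] by simp
qed

end
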